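(* Let $K$ be a triangle and $k\ge1$ an integer. Let $V(K)=\mathcal P_k(K)$, $\bm W(K)=[\mathcal P_k(K)]^2$, and $\bm M(\partial K)=\{\bm\mu:\bm\mu|_F=\bm n\times p_k\text{ for some }p_k\in\mathcal P_k(F),\text{ for each edge }F\subset\partial K\}$. Then $I_M(V(K)\times\bm W(K))=0$.
   Context: $\mathcal P_k$ denotes polynomials of total degree at most $k$. Conventions in 2D: $\nabla\times\bm v=-\partial_yv_1+\partial_xv_2$, $\nabla\times p=(\partial_yp,-\partial_xp)^T$, $\bm n\times\bm v=-n_2v_1+n_1v_2$, $\bm n\times p=(n_2p,-n_1p)^T$, $\bm n\times\bm w\times\bm n:=\bm w-(\bm w\cdot\bm n)\bm n$, $\bm n$ the unit outward normal. $I_M(V(K)\times\bm W(K)):=\dim\bm M(\partial K)-\dim\{\bm n\times v|_{\partial K}:v\in V(K),\nabla\times v=\bm0\}-\dim\{\bm n\times\bm w\times\bm n|_{\partial K}:\bm w\in\bm W(K),\nabla\times\bm w=0\}$. *)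

theory Defs
  imports "HOL-Analysis.Analysis" "HOL-Library.Function_Algebras"
begin

type_synonym pt = "real^2"

definition polyk :: "nat \<Rightarrow> (pt \<Rightarrow> real) \<Rightarrow> bool" where
  "polyk k f \<longleftrightarrow> (\<exists>c :: nat \<Rightarrow> nat \<Rightarrow> real.
      \<forall>x. f x = (\<Sum>i\<le>k. \<Sum>j\<le>k - i. c i j * (x$1)^i * (x$2)^j))"

definition pdiff :: "2 \<Rightarrow> (pt \<Rightarrow> real) \<Rightarrow> pt \<Rightarrow> real" where
  "pdiff j f x = deriv (\<lambda>t. f (x + t *\<^sub>R axis j 1)) 0"

definition curl_s :: "(pt \<Rightarrow> real) \<Rightarrow> pt \<Rightarrow> pt" where
  "curl_s p x = vector [pdiff 2 p x, - pdiff 1 p x]"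

definition curl_v :: "(pt \<Rightarrow> pt) \<Rightarrow> pt \<Rightarrow> real" where
  "curl_v w x = - pdiff 2 (\<lambda>y. w y $ 1) x + pdiff 1 (\<lambda>y. w y $ 2) x"

text \<open>n x p for scalar p, and tangential part n x w x n.\<close>
definition cross_np :: "pt \<Rightarrow> real \<Rightarrow> pt" where
  "cross_np n p = vector [n$2 * p, - (n$1) * p]"

definition tang :: "pt \<Rightarrow> pt \<Rightarrow> pt" where
  "tang n w = w - (w \<bullet> n) *\<^sub>R n"

text \<open>Triangle with vertices a0 a1 a2: vertex list, edge i is opposite vertex i.\<close>
definition tri_vertex :: "pt \<Rightarrow> pt \<Rightarrow> pt \<Rightarrow> nat \<Rightarrow> pt" where
  "tri_vertex a0 a1 a2 i = (if i = 0 then a0 else if i = 1 then a1 else a2)"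

definition tri_edge :: "pt \<Rightarrow> pt \<Rightarrow> pt \<Rightarrow> nat \<Rightarrow> pt set" where
  "tri_edge a0 a1 a2 i =
     closed_segment (tri_vertex a0 a1 a2 ((i + 1) mod 3)) (tri_vertex a0 a1 a2 ((i + 2) mod 3))"

definition tri_normal :: "pt \<Rightarrow> pt \<Rightarrow> pt \<Rightarrow> nat \<Rightarrow> pt" where
  "tri_normal a0 a1 a2 i =
     (let p = tri_vertex a0 a1 a2 ((i + 1) mod 3);
          q = tri_vertex a0 a1 a2 ((i + 2) mod 3);
          r = tri_vertex a0 a1 a2 i;
          t = q - p;
          m = (1 / norm t) *\<^sub>R vector [t$2, - (t$1)]
      in if (r - p) \<bullet> m > 0 then - m else m)"

text \<open>Functions on the boundary are represented edge-wise: mu i x for edge i < 3 and x on edge i,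
  and 0 elsewhere.\<close>
type_synonym bfun = "nat \<Rightarrow> pt \<Rightarrow> pt"

definition bscale :: "real \<Rightarrow> bfun \<Rightarrow> bfun" where
  "bscale c f = (\<lambda>i x. c *\<^sub>R f i x)"

definition bdim :: "bfun set \<Rightarrow> nat" where
  "bdim S = vector_space.dim bscale S"

definition on_bdry :: "pt \<Rightarrow> pt \<Rightarrow> pt \<Rightarrow> (nat \<Rightarrow> pt \<Rightarrow> pt) \<Rightarrow> bfun" where
  "on_bdry a0 a1 a2 g = (\<lambda>i x. if i < 3 \<and> x \<in> tri_edge a0 a1 a2 i then g i x else 0)"

definition Mspace :: "nat \<Rightarrow> pt \<Rightarrow> pt \<Rightarrow> pt \<Rightarrow> bfun set" where
  "Mspace k a0 a1 a2 = {mu. \<exists>p :: nat \<Rightarrow> pt \<Rightarrow> real. (\<forall>i<3. polyk k (p i)) \<and>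
      mu = on_bdry a0 a1 a2 (\<lambda>i x. cross_np (tri_normal a0 a1 a2 i) (p i x))}"

definition Vtrace :: "nat \<Rightarrow> pt \<Rightarrow> pt \<Rightarrow> pt \<Rightarrow> bfun set" where
  "Vtrace k a0 a1 a2 = (\<lambda>v. on_bdry a0 a1 a2 (\<lambda>i x. cross_np (tri_normal a0 a1 a2 i) (v x))) `
      {v. polyk k v \<and> (\<forall>x\<in>convex hull {a0, a1, a2}. curl_s v x = 0)}"

definition Wtrace :: "nat \<Rightarrow> pt \<Rightarrow> pt \<Rightarrow> pt \<Rightarrow> bfun set" where
  "Wtrace k a0 a1 a2 = (\<lambda>w. on_bdry a0 a1 a2 (\<lambda>i x. tang (tri_normal a0 a1 a2 i) (w x))) `
      {w. polyk k (\<lambda>x. w x $ 1) \<and> polyk k (\<lambda>x. w x $ 2) \<and>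
          (\<forall>x\<in>convex hull {a0, a1, a2}. curl_v w x = 0)}"

definition I_M :: "nat \<Rightarrow> pt \<Rightarrow> pt \<Rightarrow> pt \<Rightarrow> int" where
  "I_M k a0 a1 a2 = int (bdim (Mspace k a0 a1 a2)) - int (bdim (Vtrace k a0 a1 a2))
      - int (bdim (Wtrace k a0 a1 a2))"

end

theory Submission
  imports Defs "HOL-Computational_Algebra.Polynomial"
begin

text \<open>On \<open>\<partial>K\<close> all three spaces consist of fields \<open>p \<tau>\<close>, with \<open>\<tau>\<close> the consistently oriented unit
  tangent. A curl-free \<open>v \<in> P\<^sub>k\<close> is constant, so the traces from \<open>V\<close> are the multiples of \<open>\<tau>\<close>.
  A curl-free \<open>w \<in> [P\<^sub>k]\<^sup>2\<close> is the gradient of some \<open>\<phi> \<in> P\<^sub>k\<^sub>+\<^sub>1\<close>, so its tangential trace is the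
  tangential derivative of \<open>\<phi>\<close> and has zero circulation around \<open>\<partial>K\<close>, whereas \<open>\<tau>\<close> has circulation
  equal to the perimeter; hence the two spans meet only in \<open>0\<close>. Conversely, every generator
  \<open>s\<^sup>j \<tau>\<close> of \<open>M(\<partial>K)\<close> supported on a single edge is a multiple of \<open>\<tau>\<close> plus the tangential trace of
  the gradient of an explicit potential built from barycentric coordinates. So
  \<open>M(\<partial>K) = span V \<oplus> span W\<close>, and the dimensions add up.\<close>

section \<open>Polynomials in two variables\<close>

text \<open>Coefficient arrays are summed over the square \<open>{..N} \<times> {..N}\<close>, which is easier to shift
  and differentiate than the triangle of \<open>polyk\<close>; \<open>deg_le k c\<close> makes the two agree.\<close>

definition deg_le :: "nat \<Rightarrow> (nat \<Rightarrow> nat \<Rightarrow> real) \<Rightarrow> bool" where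
  "deg_le k c \<longleftrightarrow> (\<forall>i j. k < i + j \<longrightarrow> c i j = 0)"

definition bipoly :: "(nat \<Rightarrow> nat \<Rightarrow> real) \<Rightarrow> nat \<Rightarrow> pt \<Rightarrow> real" where
  "bipoly c N x = (\<Sum>i\<le>N. \<Sum>j\<le>N. c i j * (x$1)^i * (x$2)^j)"

definition dx_coeffs :: "(nat \<Rightarrow> nat \<Rightarrow> real) \<Rightarrow> nat \<Rightarrow> nat \<Rightarrow> real" where
  "dx_coeffs c i j = real (Suc i) * c (Suc i) j"

definition dy_coeffs :: "(nat \<Rightarrow> nat \<Rightarrow> real) \<Rightarrow> nat \<Rightarrow> nat \<Rightarrow> real" where
  "dy_coeffs c i j = real (Suc j) * c i (Suc j)"

lemma deg_le_mono: "deg_le k c \<Longrightarrow> k \<le> m \<Longrightarrow> deg_le m c"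
  by (auto simp: deg_le_def)

lemma deg_le_dx_coeffs: "deg_le (Suc k) c \<Longrightarrow> deg_le k (dx_coeffs c)"
  and deg_le_dy_coeffs: "deg_le (Suc k) c \<Longrightarrow> deg_le k (dy_coeffs c)"
  by (auto simp: deg_le_def dx_coeffs_def dy_coeffs_def)

lemma bipoly_trunc:
  assumes "deg_le k c" "k \<le> N"
  shows "bipoly c N x = bipoly c k x"
proof -
  have "bipoly c N x = (\<Sum>i\<le>N. \<Sum>j\<le>k. c i j * (x$1)^i * (x$2)^j)"
    unfolding bipoly_def
    by (intro sum.cong refl sum.mono_neutral_right) (use assms in \<open>auto simp: deg_le_def\<close>)
  also have "\<dots> = bipoly c k x"
    unfolding bipoly_def
    by (intro sum.mono_neutral_right) (use assms in \<open>auto simp: deg_le_def\<close>)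
  finally show ?thesis .
qed

lemma polyk_iff_bipoly: "polyk k f \<longleftrightarrow> (\<exists>c. deg_le k c \<and> f = bipoly c k)"
proof -
  have tri_sum: "(\<Sum>i\<le>k. \<Sum>j\<le>k - i. c i j * (x$1)^i * (x$2)^j) = bipoly c k x"
    if "deg_le k c" for c x
    unfolding bipoly_def
    by (intro sum.cong refl sum.mono_neutral_left) (use that in \<open>auto simp: deg_le_def\<close>)
  show ?thesis
  proof
    assume "polyk k f"
    then obtain c where c: "\<And>x. f x = (\<Sum>i\<le>k. \<Sum>j\<le>k - i. c i j * (x$1)^i * (x$2)^j)"
      unfolding polyk_def by blast
    define c' where "c' i j = (if i + j \<le> k then c i j else 0)" for i j
    have c': "deg_le k c'" by (auto simp: deg_le_def c'_def)
    have "f x = (\<Sum>i\<le>k. \<Sum>j\<le>k - i. c' i j * (x$1)^i * (x$2)^j)" for x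
      unfolding c c'_def by (intro sum.cong refl) auto
    then have "f = bipoly c' k"
      using tri_sum[OF c'] by auto
    with c' show "\<exists>c. deg_le k c \<and> f = bipoly c k" by blast
  next
    assume "\<exists>c. deg_le k c \<and> f = bipoly c k"
    then obtain c where c: "deg_le k c" and f: "f = bipoly c k" by blast
    show "polyk k f"
      unfolding polyk_def f by (rule exI[of _ c]) (simp add: tri_sum[OF c])
  qed
qed

lemma sum_atMost_Suc_shift_vanishing:
  fixes g :: "nat \<Rightarrow> 'a::comm_monoid_add"
  assumes "g 0 = 0" "g (Suc N) = 0"
  shows "(\<Sum>i\<le>N. g (Suc i)) = (\<Sum>i\<le>N. g i)"
  using sum.atMost_Suc_shift[of g N] assms by simp

lemma has_derivative_monomial:
  "((\<lambda>x::pt. (x$1)^i * (x$2)^j) has_derivative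
     (\<lambda>h. real i * (x$1)^(i-1) * h$1 * (x$2)^j + (x$1)^i * (real j * (x$2)^(j-1) * h$2))) (at x)"
proof -
  have "((\<lambda>x::pt. x$m) has_derivative (\<lambda>h. h$m)) (at x)" for m
    by (rule bounded_linear_imp_has_derivative) (rule bounded_linear_vec_nth)
  then show ?thesis
    by (auto intro!: derivative_eq_intros simp: algebra_simps)
qed

lemma sum_dx_monomials_eq_bipoly:
  assumes "deg_le N c"
  shows "(\<Sum>i\<le>N. \<Sum>j\<le>N. c i j * (real i * (x$1)^(i-1) * (x$2)^j))
      = bipoly (dx_coeffs c) N x"
proof -
  have "(\<Sum>i\<le>N. \<Sum>j\<le>N. c i j * (real i * (x$1)^(i-1) * (x$2)^j))
      = (\<Sum>j\<le>N. \<Sum>i\<le>N. c i j * (real i * (x$1)^(i-1) * (x$2)^j))"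
    by (rule sum.swap)
  also have "\<dots> = (\<Sum>j\<le>N. \<Sum>i\<le>N. c (Suc i) j * (real (Suc i) * (x$1)^i * (x$2)^j))"
  proof (rule sum.cong[OF refl])
    fix j
    show "(\<Sum>i\<le>N. c i j * (real i * (x$1)^(i-1) * (x$2)^j))
        = (\<Sum>i\<le>N. c (Suc i) j * (real (Suc i) * (x$1)^i * (x$2)^j))"
      using sum_atMost_Suc_shift_vanishing[of "\<lambda>i. c i j * (real i * (x$1)^(i-1) * (x$2)^j)" N]
        assms by (simp add: deg_le_def)
  qed
  also have "\<dots> = bipoly (dx_coeffs c) N x"
    unfolding bipoly_def dx_coeffs_def
    by (subst sum.swap) (auto intro!: sum.cong simp: algebra_simps)
  finally show ?thesis .
qed

lemma sum_dy_monomials_eq_bipoly: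
  assumes "deg_le N c"
  shows "(\<Sum>i\<le>N. \<Sum>j\<le>N. c i j * ((x$1)^i * (real j * (x$2)^(j-1))))
      = bipoly (dy_coeffs c) N x"
proof -
  have "(\<Sum>i\<le>N. \<Sum>j\<le>N. c i j * ((x$1)^i * (real j * (x$2)^(j-1))))
      = (\<Sum>i\<le>N. \<Sum>j\<le>N. c i (Suc j) * ((x$1)^i * (real (Suc j) * (x$2)^j)))"
  proof (rule sum.cong[OF refl])
    fix i
    show "(\<Sum>j\<le>N. c i j * ((x$1)^i * (real j * (x$2)^(j-1))))
        = (\<Sum>j\<le>N. c i (Suc j) * ((x$1)^i * (real (Suc j) * (x$2)^j)))"
      using sum_atMost_Suc_shift_vanishing[of "\<lambda>j. c i j * ((x$1)^i * (real j * (x$2)^(j-1)))" N]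
        assms by (simp add: deg_le_def)
  qed
  also have "\<dots> = bipoly (dy_coeffs c) N x"
    unfolding bipoly_def dy_coeffs_def by (auto intro!: sum.cong simp: algebra_simps)
  finally show ?thesis .
qed

lemma has_derivative_bipoly:
  assumes "deg_le N c"
  shows "(bipoly c N has_derivative
    (\<lambda>h. bipoly (dx_coeffs c) N x * h$1 + bipoly (dy_coeffs c) N x * h$2)) (at x)"
proof -
  have eq: "(\<Sum>i\<le>N. \<Sum>j\<le>N. c i j *
      (real i * (x$1)^(i-1) * h$1 * (x$2)^j + (x$1)^i * (real j * (x$2)^(j-1) * h$2)))
    = bipoly (dx_coeffs c) N x * h$1 + bipoly (dy_coeffs c) N x * h$2" for h :: pt
  proof -
    have "(\<Sum>i\<le>N. \<Sum>j\<le>N. c i j *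
        (real i * (x$1)^(i-1) * h$1 * (x$2)^j + (x$1)^i * (real j * (x$2)^(j-1) * h$2)))
      = (\<Sum>i\<le>N. \<Sum>j\<le>N. c i j * (real i * (x$1)^(i-1) * (x$2)^j)) * h$1
        + (\<Sum>i\<le>N. \<Sum>j\<le>N. c i j * ((x$1)^i * (real j * (x$2)^(j-1)))) * h$2"
      by (simp add: sum_distrib_left sum_distrib_right sum.distrib algebra_simps)
    then show ?thesis by (simp only: sum_dx_monomials_eq_bipoly[OF assms] sum_dy_monomials_eq_bipoly[OF assms])
  qed
  have "(bipoly c N has_derivative (\<lambda>h. \<Sum>i\<le>N. \<Sum>j\<le>N. c i j *
      (real i * (x$1)^(i-1) * h$1 * (x$2)^j + (x$1)^i * (real j * (x$2)^(j-1) * h$2)))) (at x)"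
  proof -
    have "bipoly c N = (\<lambda>x. \<Sum>i\<le>N. \<Sum>j\<le>N. c i j * ((x$1)^i * (x$2)^j))"
      by (simp add: bipoly_def mult.assoc fun_eq_iff)
    then show ?thesis
      by (simp only:) (intro has_derivative_sum has_derivative_mult_right has_derivative_monomial)
  qed
  then show ?thesis by (simp only: eq)
qed

lemma pdiff_eq_partials:
  assumes "(f has_derivative (\<lambda>h. g1 * h$1 + g2 * h$2)) (at x)"
  shows "pdiff 1 f x = g1" "pdiff 2 f x = g2"
proof -
  have "((\<lambda>t. f (x + t *\<^sub>R axis j 1)) has_real_derivative (g1 * axis j 1 $ 1 + g2 * axis j 1 $ 2)) (at 0)"
    for j
  proof -
    have "((\<lambda>t. x + t *\<^sub>R axis j 1) has_derivative (\<lambda>t. t *\<^sub>R axis j 1)) (at 0)"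
      by (auto intro!: derivative_eq_intros)
    moreover have "(f has_derivative (\<lambda>h. g1 * h$1 + g2 * h$2)) (at (x + 0 *\<^sub>R axis j 1))"
      using assms by simp
    ultimately have "((\<lambda>t. f (x + t *\<^sub>R axis j 1)) has_derivative
        (\<lambda>t. g1 * (t *\<^sub>R axis j 1)$1 + g2 * (t *\<^sub>R axis j 1)$2)) (at 0)"
      by (rule diff_chain_at[unfolded o_def])
    moreover have "(\<lambda>t. g1 * (t *\<^sub>R axis j 1)$1 + g2 * (t *\<^sub>R axis j 1)$2)
        = (*) (g1 * axis j 1 $ 1 + g2 * axis j 1 $ 2)"
      by (auto simp: fun_eq_iff algebra_simps)
    ultimately show ?thesis
      by (simp add: has_field_derivative_def)
  qed
  from DERIV_imp_deriv[OF this[of 1]] DERIV_imp_deriv[OF this[of 2]]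
  show "pdiff 1 f x = g1" "pdiff 2 f x = g2" by (simp_all add: pdiff_def axis_def)
qed

lemma pdiff_const: "pdiff j (\<lambda>x. c) x = 0"
  by (simp add: pdiff_def)

lemma polyk_cong: "polyk k f \<Longrightarrow> (\<And>x. f x = g x) \<Longrightarrow> polyk k g"
  by (metis ext)

lemma polyk_mono: "polyk k f \<Longrightarrow> k \<le> m \<Longrightarrow> polyk m f"
  unfolding polyk_iff_bipoly by (metis bipoly_trunc deg_le_mono ext)

lemma polyk_const: "polyk k (\<lambda>x. a)"
proof -
  define c where "c i j = (if i = 0 \<and> j = 0 then a else 0)" for i j :: nat
  have "deg_le k c" by (auto simp: deg_le_def c_def)
  moreover have "bipoly c k x = a" for x
  proof -
    have "c i j * x$1^i * x$2^j = (if j = 0 then (if i = 0 then a else 0) else 0)" for i j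
      by (auto simp: c_def)
    then show ?thesis unfolding bipoly_def by (simp only:) simp
  qed
  ultimately show ?thesis unfolding polyk_iff_bipoly by (auto intro!: exI[of _ c])
qed

lemma polyk_add: "polyk k f \<Longrightarrow> polyk k g \<Longrightarrow> polyk k (\<lambda>x. f x + g x)"
  unfolding polyk_iff_bipoly
proof (elim exE conjE)
  fix c d assume "deg_le k c" "f = bipoly c k" "deg_le k d" "g = bipoly d k"
  then show "\<exists>e. deg_le k e \<and> (\<lambda>x. f x + g x) = bipoly e k"
    by (intro exI[of _ "\<lambda>i j. c i j + d i j"])
      (auto simp: deg_le_def bipoly_def sum.distrib algebra_simps)
qed

lemma polyk_cmult: "polyk k f \<Longrightarrow> polyk k (\<lambda>x. a * f x)"
  unfolding polyk_iff_bipoly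
proof (elim exE conjE)
  fix c assume "deg_le k c" "f = bipoly c k"
  then show "\<exists>e. deg_le k e \<and> (\<lambda>x. a * f x) = bipoly e k"
    by (intro exI[of _ "\<lambda>i j. a * c i j"])
      (auto simp: deg_le_def bipoly_def sum_distrib_left algebra_simps)
qed

lemma polyk_diff: "polyk k f \<Longrightarrow> polyk k g \<Longrightarrow> polyk k (\<lambda>x. f x - g x)"
  using polyk_add[of k f "\<lambda>x. (-1) * g x"] polyk_cmult[of k g "-1"] by simp

lemma polyk_sum: "(\<And>m. m \<in> A \<Longrightarrow> polyk k (f m)) \<Longrightarrow> polyk k (\<lambda>x. \<Sum>m\<in>A. f m x)"
  by (induction A rule: infinite_finite_induct) (simp_all add: polyk_const polyk_add)

lemma polyk_mult_coord1: "polyk k f \<Longrightarrow> polyk (Suc k) (\<lambda>x. x$1 * f x)"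
  unfolding polyk_iff_bipoly
proof (elim exE conjE)
  fix c assume c: "deg_le k c" and f: "f = bipoly c k"
  define e where "e i j = (case i of 0 \<Rightarrow> 0 | Suc i' \<Rightarrow> c i' j)" for i j
  have e: "deg_le (Suc k) e" using c by (auto simp: deg_le_def e_def split: nat.splits)
  have "bipoly e (Suc k) x = x$1 * f x" for x
  proof -
    have "bipoly e (Suc k) x = (\<Sum>i\<le>Suc k. \<Sum>j\<le>Suc k. e (Suc i) j * (x$1)^(Suc i) * (x$2)^j)"
      unfolding bipoly_def
      by (rule sum_atMost_Suc_shift_vanishing[symmetric]) (use c in \<open>auto simp: e_def deg_le_def\<close>)
    also have "\<dots> = x$1 * bipoly c (Suc k) x"
      by (simp add: bipoly_def e_def sum_distrib_left algebra_simps)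
    finally show ?thesis using bipoly_trunc[OF c, of "Suc k"] by (simp add: f)
  qed
  with e show "\<exists>e. deg_le (Suc k) e \<and> (\<lambda>x. x$1 * f x) = bipoly e (Suc k)"
    by (intro exI[of _ e]) (simp add: fun_eq_iff)
qed

lemma polyk_mult_coord2: "polyk k f \<Longrightarrow> polyk (Suc k) (\<lambda>x. x$2 * f x)"
  unfolding polyk_iff_bipoly
proof (elim exE conjE)
  fix c assume c: "deg_le k c" and f: "f = bipoly c k"
  define e where "e i j = (case j of 0 \<Rightarrow> 0 | Suc j' \<Rightarrow> c i j')" for i j
  have e: "deg_le (Suc k) e" using c by (auto simp: deg_le_def e_def split: nat.splits)
  have "bipoly e (Suc k) x = x$2 * f x" for x
  proof -
    have "bipoly e (Suc k) x = (\<Sum>i\<le>Suc k. \<Sum>j\<le>Suc k. e i (Suc j) * (x$1)^i * (x$2)^(Suc j))"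
      unfolding bipoly_def
      by (intro sum.cong refl sum_atMost_Suc_shift_vanishing[symmetric])
        (use c in \<open>auto simp: e_def deg_le_def\<close>)
    also have "\<dots> = x$2 * bipoly c (Suc k) x"
      by (simp add: bipoly_def e_def sum_distrib_left algebra_simps)
    finally show ?thesis using bipoly_trunc[OF c, of "Suc k"] by (simp add: f)
  qed
  with e show "\<exists>e. deg_le (Suc k) e \<and> (\<lambda>x. x$2 * f x) = bipoly e (Suc k)"
    by (intro exI[of _ e]) (simp add: fun_eq_iff)
qed

lemma polyk_mult_affine:
  assumes "polyk k f" "\<And>x. L x = \<alpha> + \<beta> * x$1 + \<gamma> * x$2"
  shows "polyk (Suc k) (\<lambda>x. L x * f x)"
proof -
  have "polyk (Suc k) (\<lambda>x. \<alpha> * f x + (\<beta> * (x$1 * f x) + \<gamma> * (x$2 * f x)))"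
    by (intro polyk_add polyk_cmult polyk_mult_coord1 polyk_mult_coord2 polyk_mono[OF assms(1)]) auto
  then show ?thesis by (rule polyk_cong) (simp add: assms(2) algebra_simps)
qed

lemma polyk_mult_affine_power:
  assumes "polyk k f" "\<And>x. L x = \<alpha> + \<beta> * x$1 + \<gamma> * x$2"
  shows "polyk (k + m) (\<lambda>x. L x ^ m * f x)"
proof (induction m)
  case (Suc m)
  have "polyk (k + Suc m) (\<lambda>x. L x * (L x ^ m * f x))"
    using polyk_mult_affine[OF Suc assms(2)] by simp
  then show ?case by (rule polyk_cong) simp
qed (use assms(1) in simp)

lemma polyk_inner:
  fixes w :: "pt \<Rightarrow> pt"
  assumes "polyk k (\<lambda>x. w x $ 1)" "polyk k (\<lambda>x. w x $ 2)"
  shows "polyk k (\<lambda>x. w x \<bullet> u)"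
proof -
  have "polyk k (\<lambda>x. u $ 1 * w x $ 1 + u $ 2 * w x $ 2)"
    by (intro polyk_add polyk_cmult assms)
  then show ?thesis by (rule polyk_cong) (simp add: inner_vec_def sum_2 mult.commute)
qed

lemma polyk_gradient_field:
  assumes "polyk (Suc k) \<phi>"
  obtains w where "polyk k (\<lambda>x. w x $ 1)" "polyk k (\<lambda>x. w x $ 2)" "\<And>x. curl_v w x = 0"
    "\<And>x. (\<phi> has_derivative (\<lambda>h. w x \<bullet> h)) (at x)"
proof -
  obtain e where e: "deg_le (Suc k) e" and \<phi>: "\<phi> = bipoly e (Suc k)"
    using assms unfolding polyk_iff_bipoly by auto
  define w where "w x = (vector [bipoly (dx_coeffs e) (Suc k) x, bipoly (dy_coeffs e) (Suc k) x] :: pt)"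
    for x
  have w1: "(\<lambda>x. w x $ 1) = bipoly (dx_coeffs e) (Suc k)"
    and w2: "(\<lambda>x. w x $ 2) = bipoly (dy_coeffs e) (Suc k)"
    by (auto simp: w_def)
  have dx: "deg_le k (dx_coeffs e)" and dy: "deg_le k (dy_coeffs e)"
    using deg_le_dx_coeffs[OF e] deg_le_dy_coeffs[OF e] .
  show thesis
  proof (rule that)
    show "polyk k (\<lambda>x. w x $ 1)"
      unfolding w1 polyk_iff_bipoly
      by (intro exI[of _ "dx_coeffs e"]) (simp add: dx fun_eq_iff bipoly_trunc[OF dx, of "Suc k"])
    show "polyk k (\<lambda>x. w x $ 2)"
      unfolding w2 polyk_iff_bipoly
      by (intro exI[of _ "dy_coeffs e"]) (simp add: dy fun_eq_iff bipoly_trunc[OF dy, of "Suc k"])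
  next
    fix x
    have "pdiff 2 (\<lambda>y. w y $ 1) x = bipoly (dy_coeffs (dx_coeffs e)) (Suc k) x"
      unfolding w1 by (rule pdiff_eq_partials(2)[OF has_derivative_bipoly[OF deg_le_mono[OF dx]]]) simp
    moreover have "pdiff 1 (\<lambda>y. w y $ 2) x = bipoly (dx_coeffs (dy_coeffs e)) (Suc k) x"
      unfolding w2 by (rule pdiff_eq_partials(1)[OF has_derivative_bipoly[OF deg_le_mono[OF dy]]]) simp
    moreover have "dy_coeffs (dx_coeffs e) = dx_coeffs (dy_coeffs e)"
      by (auto simp: fun_eq_iff dx_coeffs_def dy_coeffs_def)
    ultimately show "curl_v w x = 0" by (simp add: curl_v_def)
  next
    fix x
    have "(\<lambda>h. w x \<bullet> h) = (\<lambda>h. bipoly (dx_coeffs e) (Suc k) x * h$1 + bipoly (dy_coeffs e) (Suc k) x * h$2)"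
      by (auto simp: fun_eq_iff inner_vec_def sum_2 w_def)
    then show "(\<phi> has_derivative (\<lambda>h. w x \<bullet> h)) (at x)"
      using has_derivative_bipoly[OF e, of x] \<phi> by simp
  qed
qed

lemma polyk_curl_s_zero_imp_constant:
  assumes "polyk k v" "convex S" "\<And>x. x \<in> S \<Longrightarrow> curl_s v x = 0"
  obtains a where "\<And>x. x \<in> S \<Longrightarrow> v x = a"
proof -
  obtain c where c: "deg_le k c" and "v = bipoly c k"
    using assms(1) unfolding polyk_iff_bipoly by blast
  then have v: "\<And>x. (v has_derivative
      (\<lambda>h. bipoly (dx_coeffs c) k x * h$1 + bipoly (dy_coeffs c) k x * h$2)) (at x)"
    using has_derivative_bipoly[OF c] by simp
  note d = pdiff_eq_partials[OF v]
  have "(v has_derivative (\<lambda>h. 0)) (at x within S)" if "x \<in> S" for x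
  proof -
    have "pdiff 1 v x = 0" "pdiff 2 v x = 0"
      using assms(3)[OF that] by (auto simp: curl_s_def vec_eq_iff forall_2)
    then have "bipoly (dx_coeffs c) k x = 0" "bipoly (dy_coeffs c) k x = 0"
      by (simp_all only: d)
    with v[of x] have "(v has_derivative (\<lambda>h. 0)) (at x)" by simp
    then show ?thesis by (rule has_derivative_at_withinI)
  qed
  then obtain a where "\<And>x. x \<in> S \<Longrightarrow> v x = a"
    using has_derivative_zero_constant[OF assms(2)] by blast
  then show thesis by (rule that)
qed

lemma bipoly_eq_0_on_ball:
  assumes r: "r > 0" and z: "\<And>x. x \<in> ball z r \<Longrightarrow> bipoly c N x = 0"
  shows "\<forall>i\<le>N. \<forall>j\<le>N. c i j = 0"
proof -
  let ?I1 = "{z$1 - r/2 <..< z$1 + r/2}" and ?I2 = "{z$2 - r/2 <..< z$2 + r/2}"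
  have in_ball: "(vector [s, t] :: pt) \<in> ball z r" if "s \<in> ?I1" "t \<in> ?I2" for s t
  proof -
    have "dist z (vector [s, t]) \<le> \<bar>(z - vector [s,t]) $ 1\<bar> + \<bar>(z - vector [s,t]) $ 2\<bar>"
      using norm_le_l1_cart[of "z - vector [s,t]"] by (simp add: dist_norm sum_2)
    also have "\<dots> < r" using that by auto
    finally show ?thesis by simp
  qed
  have eval: "bipoly c N (vector [s, t]) = (\<Sum>i\<le>N. (\<Sum>j\<le>N. c i j * t^j) * s^i)" for s t
    unfolding bipoly_def by (simp add: sum_distrib_left sum_distrib_right mult_ac)
  have coeff_t: "(\<Sum>j\<le>N. c i j * t^j) = 0" if t: "t \<in> ?I2" and i: "i \<le> N" for t i
  proof -
    have "?I1 \<subseteq> {s. (\<Sum>i\<le>N. (\<Sum>j\<le>N. c i j * t^j) * s^i) = 0}"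
      using z in_ball[OF _ t] by (auto simp: eval[symmetric])
    moreover have "infinite ?I1" using r by simp
    ultimately have "infinite {s. (\<Sum>i\<le>N. (\<Sum>j\<le>N. c i j * t^j) * s^i) = 0}"
      using finite_subset by blast
    then show ?thesis using polyfun_finite_roots[of "\<lambda>i. \<Sum>j\<le>N. c i j * t^j" N] i by auto
  qed
  show ?thesis
  proof (intro allI impI)
    fix i j assume i: "i \<le> N" and j: "j \<le> N"
    have "?I2 \<subseteq> {t. (\<Sum>j\<le>N. c i j * t^j) = 0}" using coeff_t i by auto
    moreover have "infinite ?I2" using r by simp
    ultimately have "infinite {t. (\<Sum>j\<le>N. c i j * t^j) = 0}"
      using finite_subset by blast
    then show "c i j = 0" using polyfun_finite_roots[of "\<lambda>j. c i j" N] j by auto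
  qed
qed

lemma exists_primitive_coeffs:
  assumes a: "deg_le k a" and b: "deg_le k b"
    and compat: "\<And>i j. dx_coeffs b i j = dy_coeffs a i j"
  shows "\<exists>e. deg_le (Suc k) e \<and> dx_coeffs e = a \<and> dy_coeffs e = b"
proof -
  txt \<open>Integrate \<open>a\<close> in \<open>x$1\<close>; by compatibility, the \<open>x$1\<close>-free part of \<open>b\<close> supplies the
    remaining coefficients.\<close>
  define e where "e i j = (case i of Suc i' \<Rightarrow> a i' j / real (Suc i')
     | 0 \<Rightarrow> (case j of 0 \<Rightarrow> 0 | Suc j' \<Rightarrow> b 0 j' / real (Suc j')))" for i j
  have e: "deg_le (Suc k) e" unfolding deg_le_def
  proof (intro allI impI)
    fix i j assume "Suc k < i + j"
    then show "e i j = 0" using a b unfolding deg_le_def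
      by (cases i; cases j) (auto simp: e_def)
  qed
  have dx_e: "dx_coeffs e = a" by (auto simp: fun_eq_iff dx_coeffs_def e_def)
  have dy_e: "dy_coeffs e = b"
  proof (intro ext)
    fix i j show "dy_coeffs e i j = b i j"
    proof (cases i)
      case (Suc i')
      have "real (Suc j) * a i' (Suc j) = real (Suc i') * b (Suc i') j"
        using compat[of i' j] by (simp add: dx_coeffs_def dy_coeffs_def)
      then show ?thesis using Suc by (simp add: dy_coeffs_def e_def field_simps)
    qed (simp add: dy_coeffs_def e_def)
  qed
  show ?thesis using e dx_e dy_e by blast
qed

lemma curl_free_polyk_has_potential:
  assumes w1: "polyk k (\<lambda>x. w x $ 1)" and w2: "polyk k (\<lambda>x. w x $ 2)"
    and r: "r > 0" and curl: "\<And>x. x \<in> ball z r \<Longrightarrow> curl_v w x = 0"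
  shows "\<exists>\<phi>. \<forall>x. (\<phi> has_derivative (\<lambda>h. w x \<bullet> h)) (at x)"
proof -
  obtain a where a: "deg_le k a" and wa: "(\<lambda>x. w x $ 1) = bipoly a k"
    using w1 unfolding polyk_iff_bipoly by auto
  obtain b where b: "deg_le k b" and wb: "(\<lambda>x. w x $ 2) = bipoly b k"
    using w2 unfolding polyk_iff_bipoly by auto
  have "curl_v w x = bipoly (\<lambda>i j. dx_coeffs b i j - dy_coeffs a i j) k x" for x
    using pdiff_eq_partials[OF has_derivative_bipoly[OF a]] pdiff_eq_partials[OF has_derivative_bipoly[OF b]]
    by (simp add: curl_v_def wa wb bipoly_def sum_subtractf algebra_simps)
  with curl have "\<And>x. x \<in> ball z r \<Longrightarrow> bipoly (\<lambda>i j. dx_coeffs b i j - dy_coeffs a i j) k x = 0"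
    by simp
  from bipoly_eq_0_on_ball[OF r this]
  have low: "dx_coeffs b i j = dy_coeffs a i j" if "i \<le> k" "j \<le> k" for i j
    using that by auto
  have "dx_coeffs b i j = dy_coeffs a i j" for i j
  proof (cases "i \<le> k \<and> j \<le> k")
    case False
    then have "k < Suc i + j" "k < i + Suc j" by auto
    then show ?thesis using a b by (simp add: deg_le_def dx_coeffs_def dy_coeffs_def)
  qed (use low in auto)
  then obtain e where e: "deg_le (Suc k) e" and dx_e: "dx_coeffs e = a" and dy_e: "dy_coeffs e = b"
    using exists_primitive_coeffs[OF a b] by blast
  have "(bipoly e (Suc k) has_derivative (\<lambda>h. w x \<bullet> h)) (at x)" for x
  proof -
    have "(\<lambda>h. w x \<bullet> h) = (\<lambda>h. bipoly (dx_coeffs e) (Suc k) x * h$1 + bipoly (dy_coeffs e) (Suc k) x * h$2)"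
      using fun_cong[OF wa, of x] fun_cong[OF wb, of x] bipoly_trunc[OF a, of "Suc k" x]
        bipoly_trunc[OF b, of "Suc k" x]
      by (simp add: dx_e dy_e fun_eq_iff inner_vec_def sum_2)
    then show ?thesis using has_derivative_bipoly[OF e, of x] by simp
  qed
  then show ?thesis by blast
qed

lemma poly_eq_sum_atMost:
  fixes x :: "'a::{comm_semiring_0,semiring_1}"
  assumes "degree p \<le> n"
  shows "poly p x = (\<Sum>i\<le>n. coeff p i * x ^ i)"
  unfolding poly_altdef by (rule sum.mono_neutral_left) (use assms in \<open>auto simp: coeff_eq_0\<close>)

lemma polyk_restrict_line:
  assumes "polyk k p"
  shows "\<exists>q. degree q \<le> k \<and> (\<forall>s. p (x0 + s *\<^sub>R u) = poly q s)"
proof -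
  obtain c where c: "deg_le k c" and p: "p = bipoly c k"
    using assms unfolding polyk_iff_bipoly by blast
  define q where "q = (\<Sum>i\<le>k. \<Sum>j\<le>k. smult (c i j) ([:x0$1, u$1:]^i * [:x0$2, u$2:]^j))"
  have "degree q \<le> k" unfolding q_def
  proof (intro degree_sum_le finite_atMost)
    fix i j assume "i \<in> {..k}" "j \<in> {..k}"
    show "degree (smult (c i j) ([:x0$1, u$1:]^i * [:x0$2, u$2:]^j)) \<le> k"
    proof (cases "c i j = 0")
      case False
      then have ij: "i + j \<le> k" using c unfolding deg_le_def by (meson not_le)
      have "degree (smult (c i j) ([:x0$1, u$1:]^i * [:x0$2, u$2:]^j))
          \<le> degree ([:x0$1, u$1:]^i) + degree ([:x0$2, u$2:]^j)"
        by (rule order_trans[OF degree_smult_le degree_mult_le])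
      also have "\<dots> \<le> degree [:x0$1, u$1:] * i + degree [:x0$2, u$2:] * j"
        by (intro add_mono degree_power_le)
      also have "\<dots> \<le> i + j"
        using add_mono[OF mult_right_mono mult_right_mono, of _ 1 i _ 1 j] by simp
      finally show ?thesis using ij by simp
    qed simp
  qed
  moreover have "p (x0 + s *\<^sub>R u) = poly q s" for s
    by (simp add: p bipoly_def q_def poly_sum algebra_simps)
  ultimately show ?thesis by blast
qed

section \<open>Triangles\<close>

definition det2 :: "pt \<Rightarrow> pt \<Rightarrow> real" where
  "det2 u v = u$1 * v$2 - u$2 * v$1"

lemma det2_noncollinear:
  assumes "\<not> collinear {a0, a1, a2}"
  shows "det2 (a0 - a1) (a2 - a1) \<noteq> 0"
proof
  assume det: "det2 (a0 - a1) (a2 - a1) = 0"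
  define x where "x = a0 - a1"
  define y where "y = a2 - a1"
  have det': "x$1 * y$2 = x$2 * y$1" using det by (simp add: det2_def x_def y_def)
  have "x = 0 \<or> y = 0 \<or> (\<exists>c. y = c *\<^sub>R x)"
  proof (cases "x$1 = 0")
    case True
    then have "x = 0 \<or> y = (y$2 / x$2) *\<^sub>R x"
      using det' by (auto simp: vec_eq_iff forall_2 field_simps)
    then show ?thesis by blast
  next
    case False
    then have "y = (y$1 / x$1) *\<^sub>R x"
      using det' by (simp add: vec_eq_iff forall_2 field_simps)
    then show ?thesis by blast
  qed
  then have "collinear {a0, a1, a2}"
    using collinear_3[of a0 a1 a2] collinear_lemma[of x y] by (simp add: x_def y_def)
  with assms show False by simp
qed

lemma cross_np_eq_scaleR: "cross_np n p = p *\<^sub>R cross_np n 1"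
  by (simp add: cross_np_def vec_eq_iff forall_2)

lemma tang_eq_scaleR_cross_np:
  assumes "norm n = 1"
  shows "tang n w = (w \<bullet> cross_np n 1) *\<^sub>R cross_np n 1"
proof -
  have "(n$1)^2 + (n$2)^2 = 1"
    using assms by (simp add: norm_eq_1 inner_vec_def sum_2 power2_eq_square)
  then show ?thesis
    unfolding tang_def cross_np_def vec_eq_iff forall_2
    by (simp add: inner_vec_def sum_2) (intro conjI; algebra)
qed

lemma tang_inner_orthogonal: "u \<bullet> n = 0 \<Longrightarrow> tang n w \<bullet> u = w \<bullet> u"
  by (simp add: tang_def inner_diff_left inner_commute[of n u])

lemma has_vector_derivative_along_line:
  assumes "(\<phi> has_derivative (\<lambda>h. w \<bullet> h)) (at (p + s *\<^sub>R u))"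
  shows "((\<lambda>s. \<phi> (p + s *\<^sub>R u)) has_vector_derivative (w \<bullet> u)) (at s)"
proof -
  have "((\<lambda>s. p + s *\<^sub>R u) has_derivative (\<lambda>s. s *\<^sub>R u)) (at s)"
    by (auto intro!: derivative_eq_intros)
  from diff_chain_at[OF this assms] show ?thesis
    by (simp add: has_vector_derivative_def o_def)
qed

lemma less_3_cases: "i < 3 \<Longrightarrow> i = 0 \<or> i = 1 \<or> i = (2::nat)"
  by auto

locale triangle =
  fixes a0 a1 a2 :: pt
  assumes noncollinear: "\<not> collinear {a0, a1, a2}"
begin

text \<open>Edge \<open>i\<close> is opposite vertex \<open>i\<close> and runs between the two vertices following \<open>i\<close>
  cyclically; \<open>area2\<close> is twice the signed area, and \<open>bary m\<close> is the barycentric coordinate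
  of vertex \<open>m\<close>.\<close>

definition vertex :: "nat \<Rightarrow> pt" where
  "vertex = tri_vertex a0 a1 a2"

definition edge_start :: "nat \<Rightarrow> pt" where
  "edge_start i = vertex ((i + 1) mod 3)"

definition edge_end :: "nat \<Rightarrow> pt" where
  "edge_end i = vertex ((i + 2) mod 3)"

definition edge_vec :: "nat \<Rightarrow> pt" where
  "edge_vec i = edge_end i - edge_start i"

definition edge_path :: "nat \<Rightarrow> real \<Rightarrow> pt" where
  "edge_path i s = edge_start i + s *\<^sub>R edge_vec i"

definition normal :: "nat \<Rightarrow> pt" where
  "normal i = tri_normal a0 a1 a2 i"

definition tangent :: "nat \<Rightarrow> pt" where
  "tangent i = cross_np (normal i) 1"

definition area2 :: real where
  "area2 = det2 (a0 - a1) (a2 - a1)"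

definition orient :: real where
  "orient = (if area2 > 0 then -1 else 1)"

definition bary :: "nat \<Rightarrow> pt \<Rightarrow> real" where
  "bary m x = det2 (x - edge_start m) (edge_vec m) / area2"

lemma area2_nonzero: "area2 \<noteq> 0"
  using det2_noncollinear[OF noncollinear] by (simp add: area2_def)

lemma orient_square: "orient * orient = 1"
  by (simp add: orient_def)

lemma det2_vertex_edge_vec: "i < 3 \<Longrightarrow> det2 (vertex i - edge_start i) (edge_vec i) = area2"
  by (elim less_3_cases[elim_format] disjE)
    (simp_all add: vertex_def edge_start_def edge_end_def edge_vec_def tri_vertex_def det2_def
      area2_def algebra_simps)

lemma norm_edge_vec_pos: "i < 3 \<Longrightarrow> norm (edge_vec i) > 0"
  using det2_vertex_edge_vec[of i] area2_nonzero by (auto simp: det2_def)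

lemma normal_eq:
  assumes i: "i < 3"
  shows "normal i = (orient / norm (edge_vec i)) *\<^sub>R vector [edge_vec i $ 2, - (edge_vec i $ 1)]"
proof -
  define m where "m = (1 / norm (edge_vec i)) *\<^sub>R (vector [edge_vec i $ 2, - (edge_vec i $ 1)] :: pt)"
  have normal: "normal i = (if (vertex i - edge_start i) \<bullet> m > 0 then - m else m)"
    by (simp add: normal_def tri_normal_def Let_def m_def vertex_def edge_start_def edge_end_def
        edge_vec_def)
  have "(vertex i - edge_start i) \<bullet> m = area2 / norm (edge_vec i)"
    using det2_vertex_edge_vec[OF i]
    by (simp add: m_def inner_vec_def sum_2 det2_def diff_divide_distrib[symmetric])
  then have "(vertex i - edge_start i) \<bullet> m > 0 \<longleftrightarrow> area2 > 0"
    using norm_edge_vec_pos[OF i] by (simp add: zero_less_divide_iff)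
  then show ?thesis unfolding normal by (auto simp: orient_def m_def)
qed

lemma tangent_eq: "i < 3 \<Longrightarrow> tangent i = (- orient / norm (edge_vec i)) *\<^sub>R edge_vec i"
  by (simp add: tangent_def cross_np_def normal_eq vec_eq_iff forall_2)

lemma normal_orthogonal_edge_vec: "i < 3 \<Longrightarrow> edge_vec i \<bullet> normal i = 0"
  by (simp add: normal_eq inner_vec_def sum_2 algebra_simps)

lemma norm_normal:
  assumes "i < 3"
  shows "norm (normal i) = 1"
proof -
  have "norm (vector [edge_vec i $ 2, - (edge_vec i $ 1)] :: pt) = norm (edge_vec i)"
    by (simp add: norm_eq_sqrt_inner inner_vec_def sum_2 add.commute)
  moreover have "\<bar>orient\<bar> = 1" by (simp add: orient_def)
  ultimately show ?thesis
    using norm_edge_vec_pos[OF assms] by (simp add: normal_eq[OF assms])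
qed

lemma tang_normal_eq: "i < 3 \<Longrightarrow> tang (normal i) w = (w \<bullet> tangent i) *\<^sub>R tangent i"
  unfolding tangent_def by (rule tang_eq_scaleR_cross_np[OF norm_normal])

lemma tangent_inner_edge_vec: "i < 3 \<Longrightarrow> tangent i \<bullet> edge_vec i = - orient * norm (edge_vec i)"
  using norm_edge_vec_pos[of i] by (simp add: tangent_eq dot_square_norm power2_eq_square)

lemma bary_affine:
  "bary m x = - det2 (edge_start m) (edge_vec m) / area2 + (edge_vec m $ 2 / area2) * x$1
     + (- edge_vec m $ 1 / area2) * x$2"
  by (simp add: bary_def det2_def diff_divide_distrib add_divide_distrib algebra_simps)

lemma polyk_bary: "polyk 1 (bary m)"
proof -
  have "polyk (Suc 0) (\<lambda>x. bary m x * 1)"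
    by (rule polyk_mult_affine[OF polyk_const bary_affine])
  then show ?thesis by simp
qed

lemma bary_vertex:
  assumes "m < 3" "l < 3"
  shows "bary m (vertex l) = (if l = m then 1 else 0)"
proof (cases "l = m")
  case True
  then show ?thesis using det2_vertex_edge_vec[OF assms(1)] area2_nonzero by (simp add: bary_def)
next
  case False
  then have "vertex l = edge_start m \<or> vertex l = edge_end m"
    using less_3_cases[OF assms(1)] less_3_cases[OF assms(2)]
    by (auto simp: edge_start_def edge_end_def numeral_2_eq_2)
  then show ?thesis using False by (auto simp: bary_def det2_def edge_vec_def)
qed

lemma bary_edge_path:
  "bary m (edge_path l s) = (1 - s) * bary m (edge_start l) + s * bary m (edge_end l)"
proof -
  have "det2 (edge_path l s - p) v = (1 - s) * det2 (edge_start l - p) v + s * det2 (edge_end l - p) v"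
    for p v
    by (simp add: det2_def edge_path_def edge_vec_def algebra_simps)
  then show ?thesis by (simp add: bary_def add_divide_distrib)
qed

lemma bary_edge_path_cases:
  assumes "m < 3" "l < 3"
  shows "bary m (edge_path l s)
    = (if m = (l + 1) mod 3 then 1 - s else if m = (l + 2) mod 3 then s else 0)"
  using less_3_cases[OF assms(1)] less_3_cases[OF assms(2)]
  by (elim disjE) (simp_all add: bary_edge_path edge_start_def edge_end_def bary_vertex)

lemma bary_edge_path_cyclic:
  assumes "l < 3"
  shows "bary l (edge_path l s) = 0" "bary ((l + 1) mod 3) (edge_path l s) = 1 - s"
    "bary ((l + 2) mod 3) (edge_path l s) = s"
  using less_3_cases[OF assms] by (auto simp: bary_edge_path_cases)

lemma tri_edge_eq: "tri_edge a0 a1 a2 i = closed_segment (edge_start i) (edge_end i)"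
  by (simp add: tri_edge_def edge_start_def edge_end_def vertex_def)

lemma edge_path_in_tri_edge: "s \<in> {0..1} \<Longrightarrow> edge_path i s \<in> tri_edge a0 a1 a2 i"
  unfolding tri_edge_eq closed_segment_def edge_path_def edge_vec_def
  by (auto intro!: exI[of _ s] simp: algebra_simps)

lemma tri_edge_obtain_param:
  assumes "x \<in> tri_edge a0 a1 a2 i"
  obtains s where "s \<in> {0..1}" "x = edge_path i s"
  using assms unfolding tri_edge_eq closed_segment_def edge_path_def edge_vec_def
  by (auto simp: algebra_simps)

lemma tri_edge_subset_hull: "tri_edge a0 a1 a2 i \<subseteq> convex hull {a0, a1, a2}"
  unfolding tri_edge_eq segment_convex_hull
  by (rule hull_mono) (auto simp: edge_start_def edge_end_def vertex_def tri_vertex_def)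

lemma ball_subset_hull:
  obtains z r where "r > 0" "ball z r \<subseteq> convex hull {a0, a1, a2}"
proof -
  have "a0 \<noteq> a1" "a1 \<noteq> a2" "a0 \<noteq> a2"
    using noncollinear by (auto simp: collinear_2 insert_commute)
  then have "card {a0, a1, a2} = Suc DIM(pt)" by simp
  moreover have "\<not> affine_dependent {a0, a1, a2}"
    using noncollinear collinear_3_eq_affine_dependent by blast
  ultimately have "interior (convex hull {a0, a1, a2}) \<noteq> {}"
    using interior_convex_hull_eq_empty by blast
  then obtain z r where "r > 0" "ball z r \<subseteq> interior (convex hull {a0, a1, a2})"
    using open_contains_ball open_interior by blast
  then show thesis
    using that interior_subset[of "convex hull {a0, a1, a2}"] by (meson order_trans)
qed

end

section \<open>Boundary traces\<close>

lemma (in vector_space) independent_Un_span_Int_0: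
  assumes S: "independent S" and T: "independent T" "finite T" and ST: "span S \<inter> span T = {0}"
  shows "independent (S \<union> T)"
proof -
  have "independent (S \<union> C)" if "C \<subseteq> T" for C
    using finite_subset[OF that T(2)] that
  proof (induction C rule: finite_induct)
    case (insert b C)
    have "b \<notin> span (S \<union> C)"
    proof
      assume "b \<in> span (S \<union> C)"
      then obtain x y where xy: "b = x + y" "x \<in> span S" "y \<in> span C"
        unfolding span_Un by blast
      have "y \<in> span T" using xy(3) span_mono[of C T] insert.prems by blast
      moreover have "b \<in> span T" using insert.prems span_base by blast
      ultimately have "x \<in> span T" using xy(1) span_diff by force
      then have "x = 0" using xy(2) ST by blast
      then have "b \<in> span C" using xy by simp
      moreover have "C \<subseteq> T - {b}" using insert by auto
      ultimately have "b \<in> span (T - {b})" using span_mono by blast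
      with insert.prems T(1) show False unfolding dependent_def by blast
    qed
    then show ?case using insert independent_insertI by simp
  qed (simp add: S)
  then show ?thesis by blast
qed

lemma (in vector_space) dim_Un_span_Int_0:
  assumes "finite G" "A \<subseteq> span G" "B \<subseteq> span G" and AB: "span A \<inter> span B = {0}"
  shows "dim (A \<union> B) = dim A + dim B"
proof -
  obtain BA where BA: "BA \<subseteq> A" "independent BA" "A \<subseteq> span BA" "card BA = dim A"
    using basis_exists by blast
  obtain BB where BB: "BB \<subseteq> B" "independent BB" "B \<subseteq> span BB" "card BB = dim B"
    using basis_exists by blast
  have fin: "finite BA" "finite BB"
    using independent_span_bound[OF \<open>finite G\<close> BA(2)] independent_span_bound[OF \<open>finite G\<close> BB(2)]
      BA(1) BB(1) assms(2,3) by blast+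
  have span_BA: "span BA = span A"
    using BA span_eq[of BA A] span_superset[of A] by blast
  have span_BB: "span BB = span B"
    using BB span_eq[of BB B] span_superset[of B] by blast
  have "independent (BA \<union> BB)"
    using independent_Un_span_Int_0[OF BA(2) BB(2) fin(2)] AB by (simp add: span_BA span_BB)
  moreover have "span (BA \<union> BB) = span (A \<union> B)"
    unfolding span_Un span_BA span_BB ..
  moreover have "BA \<inter> BB = {}"
  proof (rule ccontr)
    assume "BA \<inter> BB \<noteq> {}"
    then obtain x where x: "x \<in> BA" "x \<in> BB" by blast
    then have "x \<in> span A \<inter> span B" using span_BA span_BB span_base by blast
    then have "x = 0" using AB by blast
    with x BA(2) dependent_zero show False by blast
  qed
  ultimately have "dim (A \<union> B) = card BA + card BB"
    using dim_eq_card card_Un_disjoint[OF fin] by simp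
  then show ?thesis using BA(4) BB(4) by simp
qed

interpretation bfun: vector_space bscale
  by unfold_locales (auto simp: bscale_def fun_eq_iff scaleR_add_right scaleR_add_left)

lemma on_bdry_cong:
  "(\<And>i x. i < 3 \<Longrightarrow> x \<in> tri_edge a0 a1 a2 i \<Longrightarrow> f i x = g i x)
    \<Longrightarrow> on_bdry a0 a1 a2 f = on_bdry a0 a1 a2 g"
  by (auto simp: on_bdry_def fun_eq_iff)

lemma sum_fun_apply: "(\<Sum>a\<in>A. f a) x = (\<Sum>a\<in>A. f a x)"
  by (induction A rule: infinite_finite_induct) auto

context triangle
begin

definition tangent_field :: bfun where
  "tangent_field = on_bdry a0 a1 a2 (\<lambda>i x. tangent i)"

definition perimeter :: real where
  "perimeter = norm (edge_vec 0) + norm (edge_vec 1) + norm (edge_vec 2)"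

lemma perimeter_pos: "perimeter > 0"
  using norm_edge_vec_pos[of 0] norm_edge_vec_pos[of 1] norm_edge_vec_pos[of 2]
  unfolding perimeter_def by (intro add_pos_pos) auto

lemma Vtrace_eq: "Vtrace k a0 a1 a2 = range (\<lambda>c. bscale c tangent_field)"
proof (intro equalityI subsetI)
  fix \<mu> assume "\<mu> \<in> Vtrace k a0 a1 a2"
  then obtain v where v: "polyk k v" "\<And>x. x \<in> convex hull {a0, a1, a2} \<Longrightarrow> curl_s v x = 0"
    and \<mu>: "\<mu> = on_bdry a0 a1 a2 (\<lambda>i x. cross_np (normal i) (v x))"
    unfolding Vtrace_def normal_def by blast
  obtain c where "\<And>x. x \<in> convex hull {a0, a1, a2} \<Longrightarrow> v x = c"
    using polyk_curl_s_zero_imp_constant[OF v(1) convex_convex_hull v(2)] by blast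
  then have "\<mu> = bscale c tangent_field"
    using tri_edge_subset_hull
    by (auto simp: \<mu> tangent_field_def bscale_def on_bdry_def fun_eq_iff tangent_def
        cross_np_eq_scaleR[of _ "v _"])
  then show "\<mu> \<in> range (\<lambda>c. bscale c tangent_field)" by blast
next
  fix \<mu> assume "\<mu> \<in> range (\<lambda>c. bscale c tangent_field)"
  then obtain c where "\<mu> = bscale c tangent_field" by blast
  then have "\<mu> = on_bdry a0 a1 a2 (\<lambda>i x. cross_np (tri_normal a0 a1 a2 i) ((\<lambda>x. c) x))"
    by (simp add: tangent_field_def bscale_def on_bdry_def fun_eq_iff tangent_def normal_def
        cross_np_eq_scaleR[of _ c])
  moreover have "polyk k (\<lambda>x. c) \<and> (\<forall>x\<in>convex hull {a0, a1, a2}. curl_s (\<lambda>x. c) x = 0)"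
    by (simp add: polyk_const curl_s_def pdiff_const vec_eq_iff forall_2)
  ultimately show "\<mu> \<in> Vtrace k a0 a1 a2"
    unfolding Vtrace_def by (intro image_eqI[where x="\<lambda>x. c"]) auto
qed

lemma Vtrace_subset_Mspace: "Vtrace k a0 a1 a2 \<subseteq> Mspace k a0 a1 a2"
proof
  fix \<mu> assume "\<mu> \<in> Vtrace k a0 a1 a2"
  then obtain c where "\<mu> = bscale c tangent_field" using Vtrace_eq by blast
  then have "\<mu> = on_bdry a0 a1 a2 (\<lambda>i x. cross_np (tri_normal a0 a1 a2 i) ((\<lambda>i x. c) i x))"
    by (simp add: tangent_field_def bscale_def on_bdry_def fun_eq_iff tangent_def normal_def
        cross_np_eq_scaleR[of _ c])
  then show "\<mu> \<in> Mspace k a0 a1 a2"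
    unfolding Mspace_def by (intro CollectI exI[of _ "\<lambda>i x. c"]) (simp add: polyk_const)
qed

lemma Wtrace_subset_Mspace: "Wtrace k a0 a1 a2 \<subseteq> Mspace k a0 a1 a2"
proof
  fix \<mu> assume "\<mu> \<in> Wtrace k a0 a1 a2"
  then obtain w where w: "polyk k (\<lambda>x. w x $ 1)" "polyk k (\<lambda>x. w x $ 2)"
    and \<mu>: "\<mu> = on_bdry a0 a1 a2 (\<lambda>i x. tang (normal i) (w x))"
    unfolding Wtrace_def normal_def by blast
  have "\<mu> = on_bdry a0 a1 a2 (\<lambda>i x. cross_np (tri_normal a0 a1 a2 i) (w x \<bullet> tangent i))"
    unfolding \<mu> by (rule on_bdry_cong)
      (simp add: tang_normal_eq normal_def[symmetric] tangent_def cross_np_eq_scaleR[of _ "_ \<bullet> _"])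
  then show "\<mu> \<in> Mspace k a0 a1 a2"
    unfolding Mspace_def using polyk_inner[OF w]
    by (intro CollectI exI[of _ "\<lambda>i x. w x \<bullet> tangent i"]) simp
qed

text \<open>The edge integrals are required to exist, rather than
  taken with \<open>integral\<close>, so that this is a subspace even though boundary functions are arbitrary.\<close>

definition circulation_free :: "bfun \<Rightarrow> bool" where
  "circulation_free \<mu> \<longleftrightarrow> (\<exists>I. (\<forall>l<3.
      ((\<lambda>s. \<mu> l (edge_path l s) \<bullet> edge_vec l) has_integral I l) {0..1}) \<and> I 0 + I 1 + I 2 = 0)"

lemma subspace_circulation_free: "bfun.subspace {\<mu>. circulation_free \<mu>}"
proof (rule bfun.subspaceI)
  show "0 \<in> {\<mu>. circulation_free \<mu>}"
    unfolding circulation_free_def by (intro CollectI exI[of _ "\<lambda>l. 0"]) simp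
next
  fix \<mu> \<nu> assume "\<mu> \<in> {\<mu>. circulation_free \<mu>}" "\<nu> \<in> {\<mu>. circulation_free \<mu>}"
  then obtain I J where
    I: "\<forall>l<3. ((\<lambda>s. \<mu> l (edge_path l s) \<bullet> edge_vec l) has_integral I l) {0..1}" "I 0 + I 1 + I 2 = 0"
    and J: "\<forall>l<3. ((\<lambda>s. \<nu> l (edge_path l s) \<bullet> edge_vec l) has_integral J l) {0..1}" "J 0 + J 1 + J 2 = 0"
    unfolding circulation_free_def by auto
  have "\<forall>l<3. ((\<lambda>s. (\<mu> + \<nu>) l (edge_path l s) \<bullet> edge_vec l) has_integral (I l + J l)) {0..1}"
    using I(1) J(1) by (auto intro!: has_integral_add simp: inner_add_left)
  with I(2) J(2) show "\<mu> + \<nu> \<in> {\<mu>. circulation_free \<mu>}"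
    unfolding circulation_free_def by (intro CollectI exI[of _ "\<lambda>l. I l + J l"]) simp
next
  fix c \<mu> assume "\<mu> \<in> {\<mu>. circulation_free \<mu>}"
  then obtain I where
    I: "\<forall>l<3. ((\<lambda>s. \<mu> l (edge_path l s) \<bullet> edge_vec l) has_integral I l) {0..1}" "I 0 + I 1 + I 2 = 0"
    unfolding circulation_free_def by auto
  have "\<forall>l<3. ((\<lambda>s. bscale c \<mu> l (edge_path l s) \<bullet> edge_vec l) has_integral (c * I l)) {0..1}"
    using I(1) by (auto intro!: has_integral_mult_right simp: bscale_def)
  moreover have "c * I 0 + c * I 1 + c * I 2 = 0"
    using I(2) by (simp add: distrib_left[symmetric])
  ultimately show "bscale c \<mu> \<in> {\<mu>. circulation_free \<mu>}"
    unfolding circulation_free_def by (intro CollectI exI[of _ "\<lambda>l. c * I l"]) simp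
qed

lemma edge_path_0: "edge_path l 0 = edge_start l"
  and edge_path_1: "edge_path l 1 = edge_end l"
  by (simp_all add: edge_path_def edge_vec_def)

lemma gradient_trace_circulation_free:
  assumes \<phi>: "\<And>x. (\<phi> has_derivative (\<lambda>h. w x \<bullet> h)) (at x)"
  shows "circulation_free (on_bdry a0 a1 a2 (\<lambda>i x. tang (normal i) (w x)))"
    (is "circulation_free ?\<mu>")
proof -
  have integral: "((\<lambda>s. ?\<mu> l (edge_path l s) \<bullet> edge_vec l) has_integral
      (\<phi> (edge_end l) - \<phi> (edge_start l))) {0..1}" if l: "l < 3" for l
  proof -
    have "((\<lambda>s. w (edge_path l s) \<bullet> edge_vec l) has_integral
        (\<phi> (edge_path l 1) - \<phi> (edge_path l 0))) {0..1}"
      unfolding edge_path_def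
      by (rule fundamental_theorem_of_calculus)
        (simp_all add: has_vector_derivative_at_within[OF has_vector_derivative_along_line[OF \<phi>]])
    then have ftc: "((\<lambda>s. w (edge_path l s) \<bullet> edge_vec l) has_integral
        (\<phi> (edge_end l) - \<phi> (edge_start l))) {0..1}"
      by (simp only: edge_path_0 edge_path_1)
    have eq: "w (edge_path l s) \<bullet> edge_vec l = ?\<mu> l (edge_path l s) \<bullet> edge_vec l"
      if "s \<in> {0..1}" for s
    proof -
      have "?\<mu> l (edge_path l s) = tang (normal l) (w (edge_path l s))"
        using l edge_path_in_tri_edge[OF that] by (simp add: on_bdry_def)
      then show ?thesis using tang_inner_orthogonal[OF normal_orthogonal_edge_vec[OF l]] by simp
    qed
    show ?thesis by (rule has_integral_eq[OF eq ftc])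
  qed
  have telescope: "(\<phi> (edge_end 0) - \<phi> (edge_start 0)) + (\<phi> (edge_end 1) - \<phi> (edge_start 1))
      + (\<phi> (edge_end 2) - \<phi> (edge_start 2)) = 0"
  proof -
    have "edge_start 1 = edge_end 0" "edge_start 2 = edge_end 1" "edge_start 0 = edge_end 2"
      by (simp_all add: edge_start_def edge_end_def)
    then show ?thesis by simp
  qed
  show ?thesis
    unfolding circulation_free_def
    by (rule exI[of _ "\<lambda>l. \<phi> (edge_end l) - \<phi> (edge_start l)"]) (use telescope in \<open>simp add: integral\<close>)
qed

lemma Wtrace_circulation_free:
  assumes "\<mu> \<in> Wtrace k a0 a1 a2"
  shows "circulation_free \<mu>"
proof -
  obtain w where w: "polyk k (\<lambda>x. w x $ 1)" "polyk k (\<lambda>x. w x $ 2)"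
    "\<And>x. x \<in> convex hull {a0, a1, a2} \<Longrightarrow> curl_v w x = 0"
    and \<mu>: "\<mu> = on_bdry a0 a1 a2 (\<lambda>i x. tang (normal i) (w x))"
    using assms unfolding Wtrace_def normal_def by blast
  obtain z r where r: "r > 0" and ball: "ball z r \<subseteq> convex hull {a0, a1, a2}"
    by (rule ball_subset_hull)
  with w(3) have "\<And>x. x \<in> ball z r \<Longrightarrow> curl_v w x = 0" by blast
  then have "\<exists>\<phi>. \<forall>x. (\<phi> has_derivative (\<lambda>h. w x \<bullet> h)) (at x)"
    by (rule curl_free_polyk_has_potential[OF w(1,2) r])
  then obtain \<phi> where "\<And>x. (\<phi> has_derivative (\<lambda>h. w x \<bullet> h)) (at x)"
    by (elim exE) blast
  then show ?thesis unfolding \<mu> by (rule gradient_trace_circulation_free)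
qed

lemma circulation_free_tangent_field:
  assumes "circulation_free (bscale c tangent_field)"
  shows "c = 0"
proof -
  obtain I where I: "\<forall>l<3. ((\<lambda>s. bscale c tangent_field l (edge_path l s) \<bullet> edge_vec l) has_integral I l) {0..1}"
    and sum: "I 0 + I 1 + I 2 = 0"
    using assms unfolding circulation_free_def by blast
  have "I l = - c * orient * norm (edge_vec l)" if l: "l < 3" for l
  proof (rule has_integral_unique)
    show "((\<lambda>s. bscale c tangent_field l (edge_path l s) \<bullet> edge_vec l) has_integral I l) {0..1}"
      using I l by blast
    show "((\<lambda>s. bscale c tangent_field l (edge_path l s) \<bullet> edge_vec l)
        has_integral (- c * orient * norm (edge_vec l))) {0..1}"
      by (rule has_integral_eq[OF _ has_integral_const_real[of _ 0 1, simplified]])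
        (use l edge_path_in_tri_edge tangent_inner_edge_vec[OF l] in
          \<open>simp add: bscale_def tangent_field_def on_bdry_def\<close>)
  qed
  with sum have "c * orient * perimeter = 0"
    by (simp add: perimeter_def algebra_simps)
  then show "c = 0" using perimeter_pos by (simp add: orient_def split: if_splits)
qed

lemma span_Vtrace_Int_span_Wtrace:
  "bfun.span (Vtrace k a0 a1 a2) \<inter> bfun.span (Wtrace k a0 a1 a2) = {0}"
proof (intro equalityI subsetI)
  fix \<mu> assume \<mu>: "\<mu> \<in> bfun.span (Vtrace k a0 a1 a2) \<inter> bfun.span (Wtrace k a0 a1 a2)"
  have "bfun.span (Vtrace k a0 a1 a2) = range (\<lambda>c. bscale c tangent_field)"
    unfolding Vtrace_eq by (simp add: bfun.span_singleton[symmetric] full_SetCompr_eq bfun.span_span)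
  then obtain c where c: "\<mu> = bscale c tangent_field" using \<mu> by auto
  have "bfun.span (Wtrace k a0 a1 a2) \<subseteq> {\<mu>. circulation_free \<mu>}"
    by (rule bfun.span_minimal[OF _ subspace_circulation_free]) (auto intro: Wtrace_circulation_free)
  then have "c = 0" using \<mu> c circulation_free_tangent_field by auto
  then show "\<mu> \<in> {0}" using c by (simp add: bscale_def fun_eq_iff)
qed (simp add: bfun.span_zero)

definition edge_monomial :: "nat \<Rightarrow> nat \<Rightarrow> bfun" where
  "edge_monomial i j =
     on_bdry a0 a1 a2 (\<lambda>l x. if l = i then (bary ((i + 2) mod 3) x ^ j) *\<^sub>R tangent i else 0)"

lemma edge_monomial_edge_path:
  assumes "i < 3" "l < 3" "s \<in> {0..1}"
  shows "edge_monomial i j l (edge_path l s) = (if l = i then s ^ j else 0) *\<^sub>R tangent l"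
  using assms edge_path_in_tri_edge bary_edge_path_cyclic(3)[OF assms(1)]
  by (simp add: edge_monomial_def on_bdry_def)

lemma Mspace_subset_span_edge_monomials:
  "Mspace k a0 a1 a2 \<subseteq> bfun.span ((\<lambda>(i, j). edge_monomial i j) ` ({..<3} \<times> {..k}))"
proof
  fix \<mu> assume "\<mu> \<in> Mspace k a0 a1 a2"
  then obtain p where p: "\<forall>i<3. polyk k (p i)"
    and \<mu>: "\<mu> = on_bdry a0 a1 a2 (\<lambda>i x. cross_np (normal i) (p i x))"
    unfolding Mspace_def normal_def by blast
  have "\<forall>i. \<exists>q. i < 3 \<longrightarrow> degree q \<le> k \<and> (\<forall>s. p i (edge_path i s) = poly q s)"
    using p polyk_restrict_line unfolding edge_path_def by blast
  then obtain q where q: "\<And>i. i < 3 \<Longrightarrow> degree (q i) \<le> k"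
    "\<And>i s. i < 3 \<Longrightarrow> p i (edge_path i s) = poly (q i) s"
    by metis
  define \<nu> where "\<nu> = (\<Sum>i<3. \<Sum>j\<le>k. bscale (coeff (q i) j) (edge_monomial i j))"
  have "\<mu> l x = \<nu> l x" for l x
  proof (cases "l < 3 \<and> x \<in> tri_edge a0 a1 a2 l")
    case True
    then have l: "l < 3" and x: "x \<in> tri_edge a0 a1 a2 l" by auto
    from x obtain s where s: "s \<in> {0..1}" "x = edge_path l s" by (rule tri_edge_obtain_param)
    have "\<nu> l x = (\<Sum>i<3. \<Sum>j\<le>k. coeff (q i) j *\<^sub>R edge_monomial i j l x)"
      by (simp add: \<nu>_def sum_fun_apply bscale_def)
    also have "\<dots> = (\<Sum>i<3. if i = l then (\<Sum>j\<le>k. coeff (q l) j *\<^sub>R (s ^ j *\<^sub>R tangent l)) else 0)"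
      by (intro sum.cong refl) (auto simp: s(2) edge_monomial_edge_path[OF _ l s(1)])
    also have "\<dots> = (\<Sum>j\<le>k. coeff (q l) j * s ^ j) *\<^sub>R tangent l"
      using l by (simp add: scaleR_sum_left)
    also have "(\<Sum>j\<le>k. coeff (q l) j * s ^ j) = p l x"
      using q[OF l] s(2) by (simp add: poly_eq_sum_atMost)
    finally show ?thesis
      using True by (simp add: \<mu> on_bdry_def cross_np_eq_scaleR[of _ "p l x"] tangent_def)
  next
    case False
    then show ?thesis by (auto simp: \<mu> \<nu>_def sum_fun_apply bscale_def edge_monomial_def on_bdry_def)
  qed
  then have "\<mu> = \<nu>" by (simp add: fun_eq_iff)
  also have "\<nu> \<in> bfun.span ((\<lambda>(i, j). edge_monomial i j) ` ({..<3} \<times> {..k}))"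
    unfolding \<nu>_def
    by (intro bfun.span_sum bfun.span_scale bfun.span_base) (auto intro: rev_image_eqI[of "(_, _)"])
  finally show "\<mu> \<in> bfun.span ((\<lambda>(i, j). edge_monomial i j) ` ({..<3} \<times> {..k}))" .
qed

lemma tang_gradient_edge_path:
  assumes \<phi>: "\<And>x. (\<phi> has_derivative (\<lambda>h. w x \<bullet> h)) (at x)" and l: "l < 3"
    and D: "((\<lambda>r. \<phi> (edge_path l r)) has_real_derivative D) (at s)"
  shows "tang (normal l) (w (edge_path l s)) = (- orient / norm (edge_vec l) * D) *\<^sub>R tangent l"
proof -
  have "((\<lambda>r. \<phi> (edge_path l r)) has_real_derivative w (edge_path l s) \<bullet> edge_vec l) (at s)"
    using has_vector_derivative_along_line[OF \<phi>[of "edge_start l + s *\<^sub>R edge_vec l"]]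
    by (simp add: has_real_derivative_iff_has_vector_derivative edge_path_def)
  then have "w (edge_path l s) \<bullet> edge_vec l = D" using D by (rule DERIV_unique)
  then show ?thesis by (simp add: tang_normal_eq[OF l] tangent_eq[OF l])
qed

text \<open>A bubble of degree \<open>j + 1\<close> on edge \<open>i\<close>: it vanishes on the other two edges, and on edge
  \<open>i\<close> it equals \<open>s - s ^ Suc j\<close> in the edge parameter.\<close>

definition edge_bubble :: "nat \<Rightarrow> nat \<Rightarrow> pt \<Rightarrow> real" where
  "edge_bubble i j x = (\<Sum>m<j. bary ((i + 2) mod 3) x ^ m * (bary ((i + 1) mod 3) x * bary ((i + 2) mod 3) x))"

lemma polyk_edge_bubble: "polyk (Suc j) (edge_bubble i j)"
proof -
  have "polyk (Suc 1) (\<lambda>x. bary ((i + 2) mod 3) x * bary ((i + 1) mod 3) x)"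
    by (rule polyk_mult_affine[OF polyk_bary bary_affine])
  then have "polyk 2 (\<lambda>x. bary ((i + 1) mod 3) x * bary ((i + 2) mod 3) x)"
    by (simp add: numeral_2_eq_2 mult.commute)
  have "polyk (Suc j) (\<lambda>x. bary ((i + 2) mod 3) x ^ m * (bary ((i + 1) mod 3) x * bary ((i + 2) mod 3) x))"
    if "m < j" for m
    by (rule polyk_mono[OF polyk_mult_affine_power[OF \<open>polyk 2 _\<close> bary_affine]]) (use that in simp)
  then show ?thesis unfolding edge_bubble_def by (rule polyk_sum) simp
qed

lemma geometric_bubble:
  fixes s :: real
  shows "(\<Sum>m<j. s ^ m * ((1 - s) * s)) = s - s ^ Suc j"
proof -
  have "(\<Sum>m<j. s ^ m * ((1 - s) * s)) = (1 - s) * (\<Sum>m<j. s ^ m) * s"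
    by (simp add: sum_distrib_left sum_distrib_right mult_ac)
  also have "\<dots> = (1 - s ^ j) * s" by (simp add: one_diff_power_eq)
  also have "\<dots> = s - s ^ Suc j" by (simp add: algebra_simps)
  finally show ?thesis .
qed

definition tangent_weight :: "nat \<Rightarrow> nat \<Rightarrow> real" where
  "tangent_weight i j = norm (edge_vec i) / (real (Suc j) * perimeter)"

text \<open>The tangential trace of the gradient of \<open>edge_potential i j\<close> is \<open>edge_monomial i j\<close> minus
  \<open>tangent_weight i j\<close> times the tangent field: the bubble produces \<open>s ^ j\<close> on edge \<open>i\<close>, and the
  barycentric terms make the remaining constant parts equal on all three edges.\<close>

definition edge_potential :: "nat \<Rightarrow> nat \<Rightarrow> pt \<Rightarrow> real" where
  "edge_potential i j x = orient * (norm (edge_vec i) / real (Suc j) * edge_bubble i j x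
     - tangent_weight i j * (norm (edge_vec ((i + 2) mod 3)) * bary i x
       + (norm (edge_vec ((i + 1) mod 3)) + norm (edge_vec ((i + 2) mod 3))) * bary ((i + 2) mod 3) x))"

lemma polyk_edge_potential:
  assumes "j \<le> k"
  shows "polyk (Suc k) (edge_potential i j)"
proof -
  have "polyk (Suc k) (edge_bubble i j)" "polyk (Suc k) (bary m)" for m
    using polyk_mono[OF polyk_edge_bubble] polyk_mono[OF polyk_bary] assms by auto
  then show ?thesis
    unfolding edge_potential_def by (intro polyk_cmult polyk_diff polyk_add) auto
qed

lemma edge_potential_edge_path:
  fixes i j :: nat
  assumes i: "i < 3"
  defines "ia \<equiv> (i + 1) mod 3" and "ib \<equiv> (i + 2) mod 3"
    and "c \<equiv> tangent_weight i j" and "u \<equiv> \<lambda>l. norm (edge_vec l)"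
  shows "edge_potential i j (edge_path i r)
      = orient * (u i / real (Suc j) * (r - r ^ Suc j) - c * (u ia + u ib) * r)"
    and "edge_potential i j (edge_path ia r) = orient * (- c * (u ib * r + (u ia + u ib) * (1 - r)))"
    and "edge_potential i j (edge_path ib r) = orient * (- c * u ib * (1 - r))"
proof -
  have idx: "ia < 3" "ib < 3" "(ia + 1) mod 3 = ib" "(ia + 2) mod 3 = i" "(ib + 1) mod 3 = i"
    "(ib + 2) mod 3 = ia"
    using less_3_cases[OF i] by (auto simp: ia_def ib_def)
  note on_i = bary_edge_path_cyclic[OF i, of r, folded ia_def ib_def]
  note on_ia = bary_edge_path_cyclic[OF idx(1), of r, unfolded idx]
  note on_ib = bary_edge_path_cyclic[OF idx(2), of r, unfolded idx]
  show "edge_potential i j (edge_path i r)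
      = orient * (u i / real (Suc j) * (r - r ^ Suc j) - c * (u ia + u ib) * r)"
    unfolding edge_potential_def edge_bubble_def ia_def[symmetric] ib_def[symmetric] c_def[symmetric]
      on_i geometric_bubble u_def by simp
  show "edge_potential i j (edge_path ia r) = orient * (- c * (u ib * r + (u ia + u ib) * (1 - r)))"
    unfolding edge_potential_def edge_bubble_def ia_def[symmetric] ib_def[symmetric] c_def[symmetric]
      on_ia u_def by (simp add: algebra_simps)
  show "edge_potential i j (edge_path ib r) = orient * (- c * u ib * (1 - r))"
    unfolding edge_potential_def edge_bubble_def ia_def[symmetric] ib_def[symmetric] c_def[symmetric]
      on_ib u_def by (simp add: algebra_simps)
qed

lemma edge_potential_edge_path_deriv:
  fixes i j :: nat
  assumes i: "i < 3"
  defines "ia \<equiv> (i + 1) mod 3" and "ib \<equiv> (i + 2) mod 3"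
    and "c \<equiv> tangent_weight i j" and "u \<equiv> \<lambda>l. norm (edge_vec l)"
  shows "((\<lambda>r. edge_potential i j (edge_path i r)) has_real_derivative
      orient * (u i / real (Suc j) * (1 - real (Suc j) * s ^ j) - c * (u ia + u ib))) (at s)"
    and "((\<lambda>r. edge_potential i j (edge_path ia r)) has_real_derivative orient * c * u ia) (at s)"
    and "((\<lambda>r. edge_potential i j (edge_path ib r)) has_real_derivative orient * c * u ib) (at s)"
proof -
  note restrict = edge_potential_edge_path[OF i, of j, folded ia_def ib_def c_def]
  have "((\<lambda>r. r ^ Suc j) has_real_derivative real (Suc j) * s ^ j) (at s)"
    using DERIV_pow[of "Suc j" s] by simp
  then have "((\<lambda>r. orient * (u i / real (Suc j) * (r - r ^ Suc j) - c * (u ia + u ib) * r))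
      has_real_derivative orient * (u i / real (Suc j) * (1 - real (Suc j) * s ^ j) - c * (u ia + u ib) * 1))
      (at s)"
    by (intro DERIV_cmult DERIV_diff DERIV_ident)
  then show "((\<lambda>r. edge_potential i j (edge_path i r)) has_real_derivative
      orient * (u i / real (Suc j) * (1 - real (Suc j) * s ^ j) - c * (u ia + u ib))) (at s)"
    by (simp add: restrict(1) u_def)
  have "((\<lambda>r. orient * (- c * (u ib * r + (u ia + u ib) * (1 - r)))) has_real_derivative
      orient * c * u ia) (at s)"
    by (auto intro!: derivative_eq_intros simp: algebra_simps)
  then show "((\<lambda>r. edge_potential i j (edge_path ia r)) has_real_derivative orient * c * u ia) (at s)"
    by (simp add: restrict(2) u_def)
  have "((\<lambda>r. orient * (- c * u ib * (1 - r))) has_real_derivative orient * c * u ib) (at s)"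
    by (auto intro!: derivative_eq_intros)
  then show "((\<lambda>r. edge_potential i j (edge_path ib r)) has_real_derivative orient * c * u ib) (at s)"
    by (simp add: restrict(3) u_def)
qed

lemma tangent_field_plus_trace_edge_path:
  assumes grad: "\<And>x. (\<phi> has_derivative (\<lambda>h. w x \<bullet> h)) (at x)" and l: "l < 3" and s: "s \<in> {0..1}"
    and D: "((\<lambda>r. \<phi> (edge_path l r)) has_real_derivative D) (at s)"
  shows "(bscale c tangent_field + on_bdry a0 a1 a2 (\<lambda>l x. tang (normal l) (w x))) l (edge_path l s)
    = (c - orient / norm (edge_vec l) * D) *\<^sub>R tangent l"
  using l edge_path_in_tri_edge[OF s] tang_gradient_edge_path[OF grad l D]
  by (simp add: tangent_field_def bscale_def on_bdry_def algebra_simps)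

lemma perimeter_cyclic: "i < 3 \<Longrightarrow>
    perimeter = norm (edge_vec i) + norm (edge_vec ((i + 1) mod 3)) + norm (edge_vec ((i + 2) mod 3))"
  using less_3_cases[of i] by (auto simp: perimeter_def numeral_2_eq_2)

lemma edge_coefficient_identity:
  fixes u a b c t e :: real and n :: nat
  assumes u: "u > 0" and cU: "c * (u + a + b) = u / real (Suc n)" and e: "e * e = 1"
  shows "c - e / u * (e * (u / real (Suc n) * (1 - real (Suc n) * t) - c * (a + b) * 1)) = t"
proof -
  have N: "real (Suc n) > 0" by simp
  have "c + c * (a + b) / u = c * (u + a + b) / u" using u by (simp add: field_simps)
  also have "\<dots> = 1 / real (Suc n)" unfolding cU using u by simp
  finally have c: "c + c * (a + b) / u = 1 / real (Suc n)" .
  have E: "e / u * (e * Y) = Y / u" for Y using e by (simp add: field_simps)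
  have D: "(u / real (Suc n) * (1 - real (Suc n) * t) - c * (a + b) * 1) / u
      = 1 / real (Suc n) - t - c * (a + b) / u"
    using u N by (simp add: field_simps)
  show ?thesis unfolding E D using c by linarith
qed
lemma edge_monomial_edge_path_eq:
  assumes i: "i < 3" and grad: "\<And>x. (edge_potential i j has_derivative (\<lambda>h. w x \<bullet> h)) (at x)"
    and l: "l < 3" and s: "s \<in> {0..1}"
  shows "edge_monomial i j l (edge_path l s) = (bscale (tangent_weight i j) tangent_field
    + on_bdry a0 a1 a2 (\<lambda>l x. tang (normal l) (w x))) l (edge_path l s)"
    (is "_ = ?rhs")
proof -
  define ia ib c where "ia = (i + 1) mod 3" and "ib = (i + 2) mod 3" and "c = tangent_weight i j"
  define u where "u l = norm (edge_vec l)" for l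
  have u: "u m > 0" if "m < 3" for m using norm_edge_vec_pos[OF that] by (simp add: u_def)
  have rhs: "?rhs = (c - orient / u l * D) *\<^sub>R tangent l"
    if "((\<lambda>r. edge_potential i j (edge_path l r)) has_real_derivative D) (at s)" for D
    unfolding c_def u_def by (rule tangent_field_plus_trace_edge_path[OF grad l s that])
  note deriv = edge_potential_edge_path_deriv[OF i, of j s, folded ia_def ib_def c_def u_def]
  consider "l = i" | "l = ia" | "l = ib"
    using less_3_cases[OF i] less_3_cases[OF l] by (auto simp: ia_def ib_def)
  then show ?thesis
  proof cases
    case 1
    have cU: "c * (u i + u ia + u ib) = u i / real (Suc j)"
      using perimeter_pos by (simp add: c_def tangent_weight_def u_def ia_def ib_def perimeter_cyclic[OF i])
    from rhs[unfolded 1, OF deriv(1)]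
    have "?rhs = (c - orient / u i * (orient * (u i / real (Suc j) * (1 - real (Suc j) * s ^ j)
        - c * (u ia + u ib) * 1))) *\<^sub>R tangent i" by (simp only: 1 mult_1_right)
    also have "\<dots> = s ^ j *\<^sub>R tangent i"
      by (simp only: edge_coefficient_identity[OF u[OF i] cU orient_square])
    finally show ?thesis using edge_monomial_edge_path[OF i l s] 1 by simp
  next
    case 2
    from rhs[unfolded 2, OF deriv(2)] have "?rhs = 0"
      using u[OF l] 2 by (simp add: orient_def)
    moreover have "l \<noteq> i" unfolding 2 ia_def using i by presburger
    ultimately show ?thesis using edge_monomial_edge_path[OF i l s] by simp
  next
    case 3
    from rhs[unfolded 3, OF deriv(3)] have "?rhs = 0"
      using u[OF l] 3 by (simp add: orient_def)
    moreover have "l \<noteq> i" unfolding 3 ib_def using i by presburger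
    ultimately show ?thesis using edge_monomial_edge_path[OF i l s] by simp
  qed
qed

lemma edge_monomial_eq:
  assumes i: "i < 3" and grad: "\<And>x. (edge_potential i j has_derivative (\<lambda>h. w x \<bullet> h)) (at x)"
  shows "edge_monomial i j
    = bscale (tangent_weight i j) tangent_field + on_bdry a0 a1 a2 (\<lambda>l x. tang (normal l) (w x))"
proof (intro ext)
  fix l x
  show "edge_monomial i j l x
    = (bscale (tangent_weight i j) tangent_field + on_bdry a0 a1 a2 (\<lambda>l x. tang (normal l) (w x))) l x"
  proof (cases "l < 3 \<and> x \<in> tri_edge a0 a1 a2 l")
    case True
    then obtain s where "s \<in> {0..1}" "x = edge_path l s" by (blast elim: tri_edge_obtain_param)
    with True show ?thesis using edge_monomial_edge_path_eq[OF i grad] by blast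
  qed (auto simp: edge_monomial_def tangent_field_def bscale_def on_bdry_def)
qed

lemma edge_monomial_in_span:
  assumes "i < 3" "j \<le> k"
  shows "edge_monomial i j \<in> bfun.span (Vtrace k a0 a1 a2 \<union> Wtrace k a0 a1 a2)"
proof -
  obtain w where w: "polyk k (\<lambda>x. w x $ 1)" "polyk k (\<lambda>x. w x $ 2)" "\<And>x. curl_v w x = 0"
    and grad: "\<And>x. (edge_potential i j has_derivative (\<lambda>h. w x \<bullet> h)) (at x)"
    using polyk_gradient_field[OF polyk_edge_potential[OF assms(2)]] by blast
  have "on_bdry a0 a1 a2 (\<lambda>l x. tang (normal l) (w x)) \<in> Wtrace k a0 a1 a2"
    unfolding Wtrace_def normal_def by (rule image_eqI[OF refl]) (use w in auto)
  moreover have "bscale (tangent_weight i j) tangent_field \<in> Vtrace k a0 a1 a2"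
    using Vtrace_eq by auto
  ultimately show ?thesis
    unfolding edge_monomial_eq[OF assms(1) grad] by (intro bfun.span_add bfun.span_base) auto
qed

lemma I_M_eq_0: "I_M k a0 a1 a2 = 0"
proof -
  let ?M = "Mspace k a0 a1 a2" and ?V = "Vtrace k a0 a1 a2" and ?W = "Wtrace k a0 a1 a2"
    and ?G = "(\<lambda>(i, j). edge_monomial i j) ` ({..<3} \<times> {..k})"
  have M_G: "?M \<subseteq> bfun.span ?G" by (rule Mspace_subset_span_edge_monomials)
  have "?G \<subseteq> bfun.span (?V \<union> ?W)" using edge_monomial_in_span by auto
  then have "?M \<subseteq> bfun.span (?V \<union> ?W)"
    using M_G bfun.span_mono[of ?G] bfun.span_span by blast
  moreover have VW_M: "?V \<union> ?W \<subseteq> ?M" using Vtrace_subset_Mspace Wtrace_subset_Mspace by blast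
  ultimately have "bfun.span ?M = bfun.span (?V \<union> ?W)"
    using bfun.span_eq bfun.span_superset by blast
  then have "bfun.dim ?M = bfun.dim (?V \<union> ?W)" by (rule bfun.span_eq_dim)
  also have "\<dots> = bfun.dim ?V + bfun.dim ?W"
    using VW_M M_G span_Vtrace_Int_span_Wtrace by (intro bfun.dim_Un_span_Int_0[of ?G]) auto
  finally show ?thesis by (simp add: I_M_def bdim_def)
qed

end

theorem lemma5p2:
  fixes a0 a1 a2 :: "real^2" and k :: nat
  assumes "\<not> collinear {a0, a1, a2}"
    and "k \<ge> 1"
  shows "I_M k a0 a1 a2 = 0"
proof -
  interpret triangle a0 a1 a2 by unfold_locales (rule assms(1))
  show ?thesis by (rule I_M_eq_0)
qed

end
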